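(* $$c_{2r}(1,\beta,0)=\frac{1}{2^{2r}(2r)!}\prod_{i=1}^r\big(1-(2i-1)^2\beta\big).$$
   Context: Fix an integer $r\ge1$ and indeterminates $\alpha,\beta,\gamma$. Define polynomials $c_n=c_n(\alpha,\beta,\gamma)\in\mathbb{Q}[\alpha,\beta,\gamma]$ by $c_n=0$ for $n<0$, $c_0=1$, and for every integer $n\ge-3$, $$(n+4)c_{n+4}+(2n+6-r)\alpha c_{n+3}+\left[(n+2-r)\alpha^2+(2n+5-2r)\frac{\alpha^2-\beta}{4}\right]c_{n+2}+\left[(2n+3-3r)\alpha\frac{\alpha^2-\beta}{4}+\frac{\gamma}{2}\right]c_{n+1}+\frac{1}{16}(\alpha^2-\beta)^2(n+1-2r)c_n=0.$$ $c_{2r}(1,\beta,0)\in\mathbb{Q}[\beta]$ denotes $c_{2r}$ with $\alpha=1$, $\gamma=0$. *)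

theory Defs
  imports Complex_Main
begin

text \<open>The polynomials c_n(alpha,beta,gamma) in Q[alpha,beta,gamma], represented by their
  evaluation at rational points.  cseq r a b g m = c_m(a,b,g).  The recurrence with
  index n+4 = Suc k (so n = k - 3, valid for all n >= -3) is solved for c_{n+4};
  terms with negative index are 0.\<close>

fun cseq :: "nat \<Rightarrow> rat \<Rightarrow> rat \<Rightarrow> rat \<Rightarrow> nat \<Rightarrow> rat" where
  "cseq r a b g 0 = 1"
| "cseq r a b g (Suc k) =
    (let n = (of_nat k :: rat) - 3; R = (of_nat r :: rat); d = (a^2 - b) / 4 in
     - ( (2*n + 6 - R) * a * cseq r a b g k
       + (if 1 \<le> k then ((n + 2 - R) * a^2 + (2*n + 5 - 2*R) * d) * cseq r a b g (k - 1) else 0)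
       + (if 2 \<le> k then ((2*n + 3 - 3*R) * a * d + g / 2) * cseq r a b g (k - 2) else 0)
       + (if 3 \<le> k then (1/16) * (a^2 - b)^2 * (n + 1 - 2*R) * cseq r a b g (k - 3) else 0)
       ) / (n + 4))"

end

theory Submission imports Defs "HOL-Computational_Algebra.Polynomial" begin

text \<open>Put \<open>d = (1 - \<beta>)/4\<close>. For \<open>\<alpha> = 1, \<gamma> = 0\<close> the four-term recurrence is the operator
  \<open>E\<^sup>2 + E + d\<close> (\<open>E\<close> the shift) applied to the two-term recurrence
  \<open>(j+2) c(j+2) = (r-j-1) c(j+1) + d (2r-j-1) c(j)\<close>, which the initial values satisfy; so the
  two-term recurrence holds throughout. Hence \<open>c(n)\<close> is a polynomial in \<open>d\<close>, and \<open>c(2r)\<close> has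
  degree at most \<open>r\<close> with an explicit leading coefficient. The generating function \<open>F\<close> of the
  two-term recurrence satisfies \<open>(1 + x + d x\<^sup>2) F' = (r + (2r-1) d x) F\<close>. Factoring
  \<open>1 + x + d x\<^sup>2 = (1+ux)(1+vx)\<close>, this is solved by the polynomial \<open>(1+ux)\<^sup>A (1+vx)\<^sup>B\<close> whenever
  \<open>A + B = 2r-1\<close> and \<open>Au + Bv = r\<close>. For \<open>A = r-1+i\<close>, \<open>B = r-i\<close> with \<open>1 \<le> i \<le> r\<close> the degree is below
  \<open>2r\<close>, so \<open>c(2r)\<close> vanishes at \<open>d = (t\<^sup>2-1)/(4t\<^sup>2)\<close>, \<open>t = 2i-1\<close>, i.e. at \<open>1 - t\<^sup>2\<beta> = 0\<close>. These \<open>r\<close>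
  roots and the leading coefficient determine \<open>c(2r)\<close>.\<close>

lemma cseq_recurrence:
  fixes r m :: nat and b :: rat
  defines "c \<equiv> cseq r 1 b 0" and "d \<equiv> (1 - b)/4" and "R \<equiv> (of_nat r :: rat)"
  shows "(of_nat m + 4) * c (m+4) + (2*of_nat m + 6 - R) * c (m+3)
     + ((of_nat m + 2 - R) + (2*of_nat m + 5 - 2*R) * d) * c (m+2)
     + ((2*of_nat m + 3 - 3*R) * d) * c (m+1) + d^2 * (of_nat m + 1 - 2*R) * c m = 0"
proof -
  have idx: "1 \<le> m+3" "2 \<le> m+3" "3 \<le> m+3" "m+3-1 = m+2" "m+3-2 = m+1" "m+3-3 = m"
    "m+4 = Suc (m+3)" by auto
  have step: "c (m+4) = - ( (2*(of_nat (m+3) - 3) + 6 - R) * 1 * c (m+3)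
       + (((of_nat (m+3) - 3) + 2 - R) * 1^2 + (2*(of_nat (m+3) - 3) + 5 - 2*R) * ((1^2 - b)/4)) * c (m+2)
       + ((2*(of_nat (m+3) - 3) + 3 - 3*R) * 1 * ((1^2 - b)/4) + 0/2) * c (m+1)
       + (1/16) * (1^2 - b)^2 * ((of_nat (m+3) - 3) + 1 - 2*R) * c m) / ((of_nat (m+3) - 3) + 4)"
    unfolding c_def R_def idx(7)
    by (subst cseq.simps(2)) (simp only: Let_def idx if_True)
  have "(of_nat (m+3) - 3 :: rat) = of_nat m" by simp
  moreover have "(of_nat m + 4 :: rat) \<noteq> 0" by (metis of_nat_add of_nat_numeral of_nat_eq_0_iff add_is_0 zero_neq_numeral)
  ultimately show ?thesis using step unfolding d_def
    by (simp del: cseq.simps add: field_simps power2_eq_square)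
qed

lemma cseq_initial:
  fixes r :: nat and b :: rat
  defines "c \<equiv> cseq r 1 b 0" and "d \<equiv> (1 - b)/4" and "R \<equiv> (of_nat r :: rat)"
  shows "c 0 = 1" "c 1 = R"
    "2 * c 2 + (2-R) * c 1 + (-R + (1-2*R)*d) = 0"
    "3 * c 3 + (4-R) * c 2 + ((1-R)+(3-2*R)*d) * c 1 + (1-3*R)*d = 0"
proof -
  show c0: "c 0 = 1" unfolding c_def by simp
  show c1: "c 1 = R" unfolding c_def R_def by (simp add: Let_def)
  have "c 2 = - ((2 * (1 - 3) + 6 - R) * c 1 + ((1 - 3 + 2 - R) + (2 * (1 - 3) + 5 - 2 * R) * d) * c 0)
      / (1 - 3 + 4)"
    unfolding c_def R_def d_def numeral_2_eq_2 by (simp add: Let_def del: cseq.simps) (simp add: Let_def)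
  then show "2 * c 2 + (2-R) * c 1 + (-R + (1-2*R)*d) = 0" using c1 c0
    unfolding c_def by (simp add: field_simps del: cseq.simps)
  have "c 3 = - ((2 * (2 - 3) + 6 - R) * c 2 + ((2 - 3 + 2 - R) + (2 * (2 - 3) + 5 - 2 * R) * d) * c 1
      + ((2*(2-3) + 3 - 3*R) * d) * c 0) / (2 - 3 + 4)"
    unfolding c_def R_def d_def numeral_3_eq_3
    by (subst cseq.simps(2)) (simp add: Let_def numeral_2_eq_2 del: cseq.simps)
  then show "3 * c 3 + (4-R) * c 2 + ((1-R)+(3-2*R)*d) * c 1 + (1-3*R)*d = 0" using c1 c0
    unfolding c_def by (simp add: field_simps del: cseq.simps)
qed

lemma cseq_two_term_recurrence:
  fixes r j :: nat and b :: rat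
  defines "c \<equiv> cseq r 1 b 0" and "d \<equiv> (1 - b)/4" and "R \<equiv> (of_nat r :: rat)"
  shows "(of_nat j + 2) * c (j+2) = (R - of_nat j - 1) * c (j+1) + d * (2*R - of_nat j - 1) * c j"
proof -
  define S where
    "S j = (of_nat j + 2) * c (j+2) - (R - of_nat j - 1) * c (j+1) - d * (2*R - of_nat j - 1) * c j" for j
  note init = cseq_initial[of r b, folded c_def d_def R_def]
  have S0: "S 0 = 0" and S1: "S 1 = 0"
    using init unfolding S_def by (simp_all add: algebra_simps numeral_2_eq_2 numeral_3_eq_3)
  have factor: "S (m+2) + S (m+1) + d * S m = 0" for m
    using cseq_recurrence[of m r b, folded c_def d_def R_def] unfolding S_def
    by (simp add: algebra_simps power2_eq_square numeral_eq_Suc)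
  have "S j = 0 \<and> S (Suc j) = 0" for j
  proof (induction j)
    case 0 then show ?case using S0 S1 by simp
  next
    case (Suc j) then show ?case using factor[of j] by (simp add: numeral_eq_Suc)
  qed
  then have "S j = 0" by simp
  then show ?thesis unfolding S_def by simp
qed

fun cseq_poly :: "nat \<Rightarrow> nat \<Rightarrow> 'a::field_char_0 poly" where
  "cseq_poly r 0 = 1"
| "cseq_poly r (Suc 0) = [:of_nat r:]"
| "cseq_poly r (Suc (Suc n)) = smult (1 / (of_nat n + 2))
     (smult (of_nat r - of_nat n - 1) (cseq_poly r (Suc n))
      + smult (2 * of_nat r - of_nat n - 1) (pCons 0 (cseq_poly r n)))"

lemma two_term_recurrence_eq_poly_cseq_poly:
  fixes f :: "nat \<Rightarrow> 'a::field_char_0" and r :: nat and d :: 'a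
  assumes f0: "f 0 = 1" and f1: "f 1 = of_nat r"
    and rec: "\<And>j. (of_nat j + 2) * f (j+2)
      = (of_nat r - of_nat j - 1) * f (j+1) + d * (2*of_nat r - of_nat j - 1) * f j"
  shows "f n = poly (cseq_poly r n) d"
proof -
  have "f n = poly (cseq_poly r n) d \<and> f (Suc n) = poly (cseq_poly r (Suc n)) d" for n
  proof (induction n)
    case 0 then show ?case using f0 f1 by simp
  next
    case (Suc n)
    have "(of_nat n + 2 :: 'a) \<noteq> 0"
      by (metis of_nat_add of_nat_numeral of_nat_eq_0_iff add_is_0 zero_neq_numeral)
    then have "f (Suc (Suc n)) = ((of_nat r - of_nat n - 1) * f (n+1)
        + d * (2*of_nat r - of_nat n - 1) * f n) / (of_nat n + 2)"
      using rec[of n] by (simp add: field_simps numeral_2_eq_2)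
    then show ?case using Suc by (simp add: field_simps)
  qed
  then show ?thesis by simp
qed

lemma coeff_cseq_poly_eq_0: "n < 2*j \<Longrightarrow> coeff (cseq_poly r n :: 'a::field_char_0 poly) j = 0"
proof (induction r n arbitrary: j rule: cseq_poly.induct)
  case (2 r) then show ?case by (cases j) auto
next
  case (3 r n)
  then obtain j' where "j = Suc j'" by (cases j) auto
  with 3 show ?case by simp
qed (simp add: coeff_1)

lemma degree_cseq_poly_double: "degree (cseq_poly r (2*m) :: 'a::field_char_0 poly) \<le> m"
  by (rule degree_le) (auto intro: coeff_cseq_poly_eq_0)

lemma coeff_cseq_poly_double:
  "coeff (cseq_poly r (2*m) :: 'a::field_char_0 poly) m
    = (\<Prod>k=1..m. (2*of_nat r - 2*of_nat k + 1) / (2*of_nat k))"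
proof (induction m)
  case 0 then show ?case by simp
next
  case (Suc m)
  have "2 * Suc m = Suc (Suc (2*m))" by simp
  moreover have "coeff (cseq_poly r (Suc (2*m)) :: 'a poly) (Suc m) = 0"
    by (rule coeff_cseq_poly_eq_0) simp
  ultimately show ?case using Suc by (simp add: prod.nat_ivl_Suc' field_simps)
qed

lemma mult_pderiv_power: "p * pderiv (p^n) = smult (of_nat n) (p^n * pderiv p)"
proof (cases n)
  case (Suc k) then show ?thesis
    by (simp add: pderiv_power_Suc del: power_Suc) (simp add: algebra_simps)
qed simp

lemma pderiv_binomial_product:
  fixes u v d R :: "'a::field_char_0" and A B :: nat
  assumes "u + v = 1" "u * v = d" "of_nat A * u + of_nat B * v = R" "of_nat A + of_nat B = 2*R - 1"
  shows "[:1,1,d:] * pderiv ([:1,u:]^A * [:1,v:]^B) = [:R, (2*R-1)*d:] * ([:1,u:]^A * [:1,v:]^B)"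
proof -
  define F where "F = [:1,u:]^A"
  define G where "G = [:1,v:]^B"
  have quadratic: "[:1,1,d:] = [:1,u:] * [:1,v:]" using assms by (simp add: mult.commute)
  have "[:1,1,d:] * pderiv (F * G) = [:1,u:] * F * ([:1,v:] * pderiv G) + [:1,v:] * G * ([:1,u:] * pderiv F)"
    by (simp only: quadratic pderiv_mult distrib_left mult_ac add_ac)
  also have "\<dots> = F * G * (smult (of_nat A) ([:1,v:] * [:u:]) + smult (of_nat B) ([:1,u:] * [:v:]))"
    unfolding F_def G_def mult_pderiv_power by (simp add: algebra_simps pderiv_pCons smult_add_left)
  also have "smult (of_nat A) ([:1,v:] * [:u:]) + smult (of_nat B) ([:1,u:] * [:v:]) = [:R, (2*R-1)*d:]"
  proof -
    have "d * of_nat A + d * of_nat B = d * (2*R-1)" using assms(4) by (metis distrib_left)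
    then show ?thesis using assms by (simp add: algebra_simps)
  qed
  finally show ?thesis unfolding F_def G_def by (simp add: algebra_simps)
qed

lemma coeff_eq_poly_cseq_poly_if_pderiv:
  fixes P :: "'a::field_char_0 poly" and d :: 'a and r :: nat
  assumes P0: "coeff P 0 = 1"
    and ode: "[:1,1,d:] * pderiv P = [:of_nat r, (2*of_nat r-1)*d:] * P"
  shows "coeff P n = poly (cseq_poly r n) d"
proof (rule two_term_recurrence_eq_poly_cseq_poly[where f = "coeff P"])
  have c: "coeff ([:1,1,d:] * pderiv P) n = coeff ([:of_nat r, (2*of_nat r-1)*d:] * P) n" for n
    using ode by simp
  show "coeff P 0 = 1" by (rule P0)
  show "coeff P 1 = of_nat r" using c[of 0] P0 by (simp add: coeff_pderiv)
  show "(of_nat j + 2) * coeff P (j+2)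
      = (of_nat r - of_nat j - 1) * coeff P (j+1) + d * (2*of_nat r - of_nat j - 1) * coeff P j" for j
    using c[of "Suc j"] P0 by (cases j) (simp_all add: coeff_pderiv algebra_simps numeral_2_eq_2)
qed

lemma poly_cseq_poly_double_root:
  fixes r i :: nat
  assumes "1 \<le> i" "i \<le> r"
  defines "t \<equiv> 2 * of_nat i - 1 :: 'a::linordered_field"
  shows "poly (cseq_poly r (2*r)) ((t^2 - 1) / (4 * t^2)) = 0"
proof -
  define u where "u = (t + 1) / (2*t)"
  define v where "v = (t - 1) / (2*t)"
  define d where "d = (t^2 - 1) / (4 * t^2)"
  define A where "A = r - 1 + i"
  define B where "B = r - i"
  define P where "P = [:1,u:]^A * [:1,v:]^B"
  have "(of_nat i :: 'a) \<ge> 1" using assms(1) by simp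
  then have "t \<noteq> 0" unfolding t_def by linarith
  have sum_AB: "of_nat A + of_nat B = 2 * (of_nat r :: 'a) - 1"
    and diff_AB: "of_nat A - of_nat B = t"
    unfolding A_def B_def t_def using assms by (simp_all add: of_nat_diff)
  have "u + v = 1" "u * v = d" using \<open>t \<noteq> 0\<close> unfolding u_def v_def d_def
    by (simp_all add: field_simps power2_eq_square)
  moreover have "of_nat A * u + of_nat B * v = of_nat r"
  proof -
    have "of_nat A * u + of_nat B * v = ((of_nat A + of_nat B) * t + (of_nat A - of_nat B)) / (2*t)"
      using \<open>t \<noteq> 0\<close> unfolding u_def v_def by (simp add: field_simps)
    also have "\<dots> = of_nat r" using \<open>t \<noteq> 0\<close> unfolding sum_AB diff_AB by (simp add: field_simps)
    finally show ?thesis .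
  qed
  moreover note sum_AB
  ultimately have ode: "[:1,1,d:] * pderiv P = [:of_nat r, (2*of_nat r-1)*d:] * P"
    unfolding P_def by (rule pderiv_binomial_product)
  have "coeff P 0 = 1" unfolding P_def poly_0_coeff_0[symmetric] by simp
  then have "coeff P (2*r) = poly (cseq_poly r (2*r)) d"
    using ode by (rule coeff_eq_poly_cseq_poly_if_pderiv)
  moreover have "degree P < 2*r"
  proof -
    have "degree P \<le> degree [:1,u:] * A + degree [:1,v:] * B"
      unfolding P_def by (meson add_mono degree_mult_le degree_power_le order_trans)
    also have "\<dots> \<le> A + B" by (intro add_mono) auto
    also have "\<dots> < 2*r" unfolding A_def B_def using assms by linarith
    finally show ?thesis .
  qed
  ultimately show ?thesis unfolding d_def by (simp add: coeff_eq_0)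
qed

lemma fact_double_eq_prod_odd_even:
  "(fact (2*r) :: 'a::{comm_ring_1,semiring_char_0}) = (\<Prod>i=1..r. 2*of_nat i - 1) * (\<Prod>i=1..r. 2*of_nat i)"
proof (induction r)
  case 0 then show ?case by simp
next
  case (Suc r)
  have "2 * Suc r = Suc (Suc (2*r))" by simp
  then show ?case using Suc by (simp add: prod.nat_ivl_Suc' algebra_simps)
qed

lemma prod_odd_over_even_eq:
  "(\<Prod>k=1..r. (2*of_nat r - 2*of_nat k + 1) / (2*of_nat k) :: 'a::field_char_0)
    = (\<Prod>i=1..r. 4 * (2*of_nat i - 1)^2) / (2^(2*r) * fact (2*r))"
proof -
  define Od where "Od = (\<Prod>i=1..r. (2*of_nat i - 1 :: 'a))"
  define Ev where "Ev = (\<Prod>i=1..r. (2*of_nat i :: 'a))"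
  have "(\<Prod>k=1..r. (2*of_nat r - 2*of_nat k + 1 :: 'a)) = Od"
    unfolding Od_def by (subst prod.atLeastAtMost_rev) (rule prod.cong, auto simp: of_nat_diff)
  then have lhs: "(\<Prod>k=1..r. (2*of_nat r - 2*of_nat k + 1) / (2*of_nat k) :: 'a) = Od / Ev"
    unfolding prod_dividef Ev_def by simp
  have "Od = of_nat (\<Prod>i=1..r. 2*i - 1)"
    unfolding Od_def of_nat_prod by (rule prod.cong) (auto simp: of_nat_diff)
  moreover have "(\<Prod>i=1..r. 2*i - 1 :: nat) \<noteq> 0" by (simp add: prod_zero_iff)
  ultimately have "Od \<noteq> 0" by (simp only: of_nat_eq_0_iff not_False_eq_True)
  moreover have "Ev \<noteq> 0" unfolding Ev_def by (simp add: prod_zero_iff)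
  moreover have "(\<Prod>i=1..r. 4 * (2*of_nat i - 1)^2 :: 'a) = 4^r * Od^2"
    unfolding Od_def by (simp add: prod.distrib prod_power_distrib)
  moreover have "(2::'a)^(2*r) = 4^r" by (simp add: power_mult)
  ultimately show ?thesis
    unfolding lhs fact_double_eq_prod_odd_even Od_def[symmetric] Ev_def[symmetric]
    by (simp add: field_simps power2_eq_square)
qed

lemma odd_root_eq_iff:
  fixes s t :: "'a::linordered_field"
  assumes "s > 0" "t > 0"
  shows "(s^2 - 1) / (4 * s^2) = (t^2 - 1) / (4 * t^2) \<longleftrightarrow> s = t"
proof
  assume "(s^2 - 1) / (4 * s^2) = (t^2 - 1) / (4 * t^2)"
  then have "s^2 = t^2" using assms by (simp add: field_simps)
  then show "s = t" using assms by (simp add: power2_eq_iff_nonneg)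
qed simp

lemma cseq_poly_double_eq_prod:
  "cseq_poly r (2*r) = smult (1 / (2^(2*r) * fact (2*r)))
     (\<Prod>i=1..r. [:1 - (2*of_nat i - 1)^2, 4 * (2*of_nat i - 1)^2:] :: 'a::linordered_field poly)"
  (is "_ = smult _ (\<Prod>i=1..r. ?lin i)")
proof (rule poly_eqI_degree_lead_coeff)
  define t :: "nat \<Rightarrow> 'a" where "t i = 2 * of_nat i - 1" for i
  define root where "root i = (t i ^ 2 - 1) / (4 * t i ^ 2)" for i
  have t_pos: "t i > 0" if "i \<in> {1..r}" for i
  proof -
    have "(of_nat i :: 'a) \<ge> 1" using that by simp
    then show ?thesis unfolding t_def by linarith
  qed
  have degree_lin: "degree (?lin i) = 1" if "i \<in> {1..r}" for i
    using t_pos[OF that] unfolding t_def by simp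
  then have degree_prod: "degree (\<Prod>i=1..r. ?lin i) = r"
    by (subst degree_prod_eq_sum_degree) (auto simp: degree_lin)
  have "coeff (\<Prod>i=1..r. ?lin i) r = lead_coeff (\<Prod>i=1..r. ?lin i)"
    by (simp only: degree_prod)
  also have "\<dots> = (\<Prod>i=1..r. lead_coeff (?lin i))" by (rule lead_coeff_prod)
  also have "\<dots> = (\<Prod>i=1..r. 4 * (2*of_nat i - 1)^2)"
  proof (rule prod.cong)
    fix i assume "i \<in> {1..r}"
    then show "lead_coeff (?lin i) = 4 * (2*of_nat i - 1)^2" using degree_lin[of i] by simp
  qed simp
  finally have coeff_prod: "coeff (\<Prod>i=1..r. ?lin i) r = (\<Prod>i=1..r. 4 * (2*of_nat i - 1)^2)" .
  show "coeff (cseq_poly r (2*r)) r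
      = coeff (smult (1 / (2^(2*r) * fact (2*r))) (\<Prod>i=1..r. ?lin i)) r"
    unfolding coeff_smult coeff_prod coeff_cseq_poly_double prod_odd_over_even_eq by simp
  have "inj_on root {1..r}"
    by (rule inj_onI) (simp add: root_def odd_root_eq_iff t_pos, simp add: t_def)
  then show "card (root ` {1..r}) \<ge> r" by (simp add: card_image)
  show "degree (cseq_poly r (2*r) :: 'a poly) \<le> r" by (rule degree_cseq_poly_double)
  show "degree (smult (1 / (2^(2*r) * fact (2*r))) (\<Prod>i=1..r. ?lin i)) \<le> r"
    by (rule order_trans[OF degree_smult_le]) (simp only: degree_prod order_refl)
  fix z assume "z \<in> root ` {1..r}"
  then obtain i where i: "i \<in> {1..r}" and z: "z = root i" by auto
  have "poly (?lin i) z = 0" using t_pos[OF i] unfolding z root_def t_def by (simp add: field_simps)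
  then have "poly (\<Prod>i=1..r. ?lin i) z = 0" using i by (auto simp: poly_prod prod_zero_iff)
  moreover have "poly (cseq_poly r (2*r)) z = 0"
    using i unfolding z root_def t_def by (intro poly_cseq_poly_double_root) auto
  ultimately show "poly (cseq_poly r (2*r)) z = poly (smult (1 / (2^(2*r) * fact (2*r))) (\<Prod>i=1..r. ?lin i)) z"
    by simp
qed

theorem lemma4p4:
  fixes r :: nat and \<beta> :: rat
  assumes "r \<ge> 1"
  shows "cseq r 1 \<beta> 0 (2*r) =
    1 / (2^(2*r) * fact (2*r)) * (\<Prod>i=1..r. (1 - (2 * of_nat i - 1)^2 * \<beta>))"
proof -
  have "cseq r 1 \<beta> 0 (2*r) = poly (cseq_poly r (2*r)) ((1 - \<beta>)/4)"
    by (rule two_term_recurrence_eq_poly_cseq_poly[OF cseq_initial(1,2) cseq_two_term_recurrence])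
  also have "\<dots> = 1 / (2^(2*r) * fact (2*r)) * (\<Prod>i=1..r. (1 - (2 * of_nat i - 1)^2 * \<beta>))"
    unfolding cseq_poly_double_eq_prod poly_smult poly_prod
    by (intro arg_cong[where f = "(*) _"] prod.cong) (simp_all add: field_simps)
  finally show ?thesis .
qed

end
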